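(* A symbolic matrix product $P$ is real-eigenvalued if and only if $P$ is symmetric.
   Context: Let $X_1,\dots,X_\ell$ be formal variables. A symbolic matrix product of degree $k$ with $\ell$ variables is a formal word $P=\prod_{i=1}^{k}X_{\iota(i)}^{\tau(i)}$ with $\iota:[k]\to[\ell]$ and $\tau:[k]\to\{1,T\}$. Formal transposition acts on words by $(X_i^{1})^T=X_i^T$, $(X_i^T)^T=X_i$ and $(W_1W_2)^T=W_2^TW_1^T$; equality of products means equality as formal words. For $n\in\mathbb N$ and $A_1,\dots,A_\ell\in\mathbb R^{n\times n}$, $P(A_1,\dots,A_\ell)\in\mathbb R^{n\times n}$ denotes the matrix obtained by substituting $A_i$ for $X_i$ (and $A_i^T$ for $X_i^T$) and multiplying. $P$ is called real-eigenvalued if for every $n\in\mathbb N$ and all $A_1,\dots,A_\ell\in\mathbb R^{n\times n}$, all (complex) eigenvalues of $P(A_1,\dots,A_\ell)$ are real. $P$ is called symmetric if $k$ is even and there exists $j\in[k]$ such that, with indices taken modulo $k$, the cyclically shifted word $\prod_{i=j+1}^{j+k}X_{\iota(i)}^{\tau(i)}$ equals $LL^T$ as a formal word, where $L=\prod_{i=j+1}^{j+k/2}X_{\iota(i)}^{\tau(i)}$. *)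

theory Defs
  imports "Jordan_Normal_Form.Char_Poly"
begin

text \<open>A symbolic matrix product is a word: a list of letters (i, t) where i is the
  variable index and t = True means the letter is X_i^T, t = False means X_i.\<close>
type_synonym word = "(nat \<times> bool) list"

definition word_over :: "nat \<Rightarrow> word \<Rightarrow> bool" where
  "word_over l w \<longleftrightarrow> w \<noteq> [] \<and> (\<forall>(i, t) \<in> set w. i < l)"

definition word_transpose :: "word \<Rightarrow> word" where
  "word_transpose w = rev (map (\<lambda>(i, t). (i, \<not> t)) w)"

definition letter_mat :: "(nat \<Rightarrow> real mat) \<Rightarrow> nat \<times> bool \<Rightarrow> real mat" where
  "letter_mat A x = (if snd x then transpose_mat (A (fst x)) else A (fst x))"

definition eval_word :: "nat \<Rightarrow> (nat \<Rightarrow> real mat) \<Rightarrow> word \<Rightarrow> real mat" where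
  "eval_word n A w = foldr (\<lambda>x M. letter_mat A x * M) w (1\<^sub>m n)"

definition real_eigenvalued :: "nat \<Rightarrow> word \<Rightarrow> bool" where
  "real_eigenvalued l w \<longleftrightarrow>
     (\<forall>n::nat. \<forall>A :: nat \<Rightarrow> real mat.
        (\<forall>i<l. A i \<in> carrier_mat n n) \<longrightarrow>
        (\<forall>z::complex. eigenvalue (map_mat complex_of_real (eval_word n A w)) z \<longrightarrow> z \<in> \<real>))"

definition symmetric_word :: "word \<Rightarrow> bool" where
  "symmetric_word w \<longleftrightarrow> even (length w) \<and>
     (\<exists>j < length w. let r = rotate j w; L = take (length w div 2) r
                     in r = L @ word_transpose L)"

end

(*
  If P rotates to L L^T, then P(A) = U V with V U = M M^T, so the nonzero eigenvalues of P(A)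
  are those of a real symmetric matrix.

  Conversely, let w be the word of P, of length k.  Substitute for X_i the realification of the
  complex k x k matrix that moves one step along the cycle of positions of w: forwards with
  weight theta = exp(i pi / 2k) across an edge labelled X_i, backwards with weight cnj theta
  across an edge labelled X_i^T.  The matrix for X_i^T is then the adjoint of the one for X_i,
  which realification turns into the transpose.  A diagonal entry of P sums the closed walks
  of length k, weighted by theta^(k * winding number).  Following w once around gives winding
  number 1 and weight theta^k = i, while a walk of winding number -1 reads w backwards with
  every letter transposed, which happens only if P is symmetric.  So for non-symmetric P the
  trace has positive imaginary part and some eigenvalue is not real.
*)
theory Submission
  imports Defs "Jordan_Normal_Form.Schur_Decomposition"
begin

section \<open>Traces and eigenvalues\<close>

lemma index_mult_mat_sum:
  assumes "A \<in> carrier_mat m n" "B \<in> carrier_mat n p" "i < m" "j < p"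
  shows "(A * B) $$ (i, j) = (\<Sum>k<n. A $$ (i, k) * B $$ (k, j))"
  using assms by (simp add: scalar_prod_def atLeast0LessThan)

lemma index_mult_mat_vec_sum:
  assumes "A \<in> carrier_mat m n" "v \<in> carrier_vec n" "i < m"
  shows "(A *\<^sub>v v) $ i = (\<Sum>k<n. A $$ (i, k) * v $ k)"
  using assms by (simp add: scalar_prod_def atLeast0LessThan)

definition mat_trace :: "'a::comm_ring_1 mat \<Rightarrow> 'a" where
  "mat_trace A = (\<Sum>i<dim_row A. A $$ (i, i))"

lemma mat_trace_mult_comm:
  fixes A B :: "'a::comm_ring_1 mat"
  assumes A: "A \<in> carrier_mat n m" and B: "B \<in> carrier_mat m n"
  shows "mat_trace (A * B) = mat_trace (B * A)"
proof -
  have "mat_trace (A * B) = (\<Sum>i<n. \<Sum>j<m. A $$ (i, j) * B $$ (j, i))"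
    using A B by (auto simp: mat_trace_def index_mult_mat_sum simp del: index_mult_mat(1) intro!: sum.cong)
  also have "\<dots> = (\<Sum>j<m. \<Sum>i<n. B $$ (j, i) * A $$ (i, j))"
    by (subst sum.swap) (simp add: mult.commute)
  also have "\<dots> = mat_trace (B * A)"
    using A B by (auto simp: mat_trace_def index_mult_mat_sum simp del: index_mult_mat(1) intro!: sum.cong)
  finally show ?thesis .
qed

lemma mat_trace_real_if_eigenvalues_real:
  fixes C :: "complex mat"
  assumes C: "C \<in> carrier_mat n n" and real: "\<And>z. eigenvalue C z \<Longrightarrow> z \<in> \<real>"
  shows "mat_trace C \<in> \<real>"
proof -
  obtain es where cp: "char_poly C = (\<Prod>a \<leftarrow> es. [:- a, 1:])"
    using char_poly_factorized[OF C] by blast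
  obtain B P Q where "schur_decomposition C es = (B, P, Q)"
    by (cases "schur_decomposition C es") auto
  from schur_decomposition[OF C cp this]
  have sim: "similar_mat_wit C B P Q" and diag: "diag_mat B = es" by auto
  from sim C have car: "B \<in> carrier_mat n n" "P \<in> carrier_mat n n" "Q \<in> carrier_mat n n"
    and QP: "Q * P = 1\<^sub>m n" and CB: "C = P * B * Q"
    unfolding similar_mat_wit_def Let_def by auto
  have "mat_trace C = mat_trace (P * (B * Q))"
    using CB car by (simp add: assoc_mult_mat[of P n n B n Q n])
  also have "\<dots> = mat_trace (B * Q * P)"
    using car by (intro mat_trace_mult_comm) auto
  also have "\<dots> = mat_trace B"
    using car QP by (simp add: assoc_mult_mat[of B n n Q n P n])
  also have "\<dots> = sum_list es"
    unfolding diag[symmetric] mat_trace_def diag_mat_def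
    by (simp add: sum_list_sum_nth atLeast0LessThan)
  finally have trace: "mat_trace C = sum_list es" .
  have "e \<in> \<real>" if "e \<in> set es" for e
  proof (rule real)
    have "poly (char_poly C) e = 0"
      unfolding cp using that by (induction es) (auto simp: poly_prod_list)
    then show "eigenvalue C e"
      using eigenvalue_root_char_poly[OF C] by simp
  qed
  then have "sum_list es \<in> \<real>"
    by (induction es) auto
  then show ?thesis
    using trace by simp
qed

lemma eigenvalue_if_intertwined:
  fixes A B J :: "'a::field mat"
  assumes A: "A \<in> carrier_mat n n" and B: "B \<in> carrier_mat m m" and J: "J \<in> carrier_mat m n"
    and BJ: "B * J = J * A" and v: "eigenvector A v z" and Jv: "J *\<^sub>v v \<noteq> 0\<^sub>v m"
  shows "eigenvalue B z"
proof -
  have v_car: "v \<in> carrier_vec n" and Av: "A *\<^sub>v v = z \<cdot>\<^sub>v v"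
    using v A unfolding eigenvector_def by auto
  have "B *\<^sub>v (J *\<^sub>v v) = (J * A) *\<^sub>v v"
    using A B J v_car by (simp add: BJ[symmetric])
  also have "\<dots> = z \<cdot>\<^sub>v (J *\<^sub>v v)"
    using A J v_car by (simp add: Av mult_mat_vec)
  finally have "B *\<^sub>v (J *\<^sub>v v) = z \<cdot>\<^sub>v (J *\<^sub>v v)" .
  then show ?thesis
    using B J v_car Jv unfolding eigenvalue_def eigenvector_def by (auto intro!: exI[of _ "J *\<^sub>v v"])
qed

lemma eigenvalue_mult_swap:
  fixes X Y :: "'a::field mat"
  assumes X: "X \<in> carrier_mat n n" and Y: "Y \<in> carrier_mat n n"
    and ev: "eigenvalue (X * Y) z" and z: "z \<noteq> 0"
  shows "eigenvalue (Y * X) z"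
proof -
  obtain v where v: "eigenvector (X * Y) v z"
    using ev unfolding eigenvalue_def by blast
  then have v_car: "v \<in> carrier_vec n" and v0: "v \<noteq> 0\<^sub>v n" and XYv: "(X * Y) *\<^sub>v v = z \<cdot>\<^sub>v v"
    using X Y unfolding eigenvector_def by auto
  have "Y *\<^sub>v v \<noteq> 0\<^sub>v n"
  proof
    assume "Y *\<^sub>v v = 0\<^sub>v n"
    then have "X *\<^sub>v (Y *\<^sub>v v) = 0\<^sub>v n"
      using X by (intro eq_vecI) auto
    then have "z \<cdot>\<^sub>v v = 0\<^sub>v n"
      using X Y v_car XYv by (simp add: assoc_mult_mat_vec)
    then have "inverse z \<cdot>\<^sub>v (z \<cdot>\<^sub>v v) = 0\<^sub>v n"
      by (intro eq_vecI) auto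
    then show False
      using z v0 by (simp add: smult_smult_assoc)
  qed
  moreover have "(Y * X) * Y = Y * (X * Y)"
    using X Y by (simp add: assoc_mult_mat)
  ultimately show ?thesis
    using X Y v by (intro eigenvalue_if_intertwined[of "X * Y" n _ _ Y]) auto
qed

lemma quadratic_form_real_if_symmetric:
  fixes S :: "real mat" and v :: "complex vec"
  assumes S: "S \<in> carrier_mat n n" and sym: "transpose_mat S = S"
  shows "(\<Sum>i<n. \<Sum>j<n. cnj (v $ i) * of_real (S $$ (i, j)) * v $ j) \<in> \<real>"
proof -
  have S_sym: "S $$ (j, i) = S $$ (i, j)" if "i < n" "j < n" for i j
    using that S by (metis carrier_matD index_transpose_mat(1) sym)
  have "cnj (\<Sum>i<n. \<Sum>j<n. cnj (v $ i) * of_real (S $$ (i, j)) * v $ j) =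
      (\<Sum>i<n. \<Sum>j<n. v $ i * of_real (S $$ (i, j)) * cnj (v $ j))"
    by simp
  also have "\<dots> = (\<Sum>j<n. \<Sum>i<n. v $ i * of_real (S $$ (i, j)) * cnj (v $ j))"
    by (rule sum.swap)
  also have "\<dots> = (\<Sum>i<n. \<Sum>j<n. cnj (v $ i) * of_real (S $$ (i, j)) * v $ j)"
    by (intro sum.cong refl) (simp add: S_sym mult.commute mult.left_commute)
  finally show ?thesis
    by (simp add: Reals_cnj_iff)
qed

lemma eigenvalue_real_if_symmetric:
  fixes S :: "real mat"
  assumes S: "S \<in> carrier_mat n n" and sym: "transpose_mat S = S"
    and ev: "eigenvalue (map_mat complex_of_real S) z"
  shows "z \<in> \<real>"
proof -
  let ?H = "map_mat complex_of_real S"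
  obtain v where v: "v \<in> carrier_vec n" "v \<noteq> 0\<^sub>v n" "?H *\<^sub>v v = z \<cdot>\<^sub>v v"
    using S ev unfolding eigenvalue_def eigenvector_def by auto
  have row: "(\<Sum>j<n. of_real (S $$ (i, j)) * v $ j) = z * v $ i" if "i < n" for i
  proof -
    have "(?H *\<^sub>v v) $ i = (\<Sum>j<n. of_real (S $$ (i, j)) * v $ j)"
      using S v(1) that by (auto simp: index_mult_mat_vec_sum[of ?H n n] simp del: index_mult_mat_vec intro!: sum.cong)
    then show ?thesis
      using v(1,3) that by simp
  qed
  define r where "r = (\<Sum>i<n. (cmod (v $ i))\<^sup>2)"
  have "(\<Sum>i<n. \<Sum>j<n. cnj (v $ i) * of_real (S $$ (i, j)) * v $ j) = (\<Sum>i<n. z * (cnj (v $ i) * v $ i))"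
    by (intro sum.cong refl) (simp add: mult.assoc row flip: sum_distrib_left)
  also have "\<dots> = z * of_real r"
    unfolding r_def sum_distrib_left of_real_sum
    by (intro sum.cong refl) (metis complex_norm_square mult.commute mult.left_commute of_real_power)
  finally have "Im z * r = 0"
    using quadratic_form_real_if_symmetric[OF S sym, of v] by (simp add: complex_is_Real_iff)
  moreover obtain i where "i < n" "v $ i \<noteq> 0"
    using v by (metis eq_vecI carrier_vecD index_zero_vec)
  then have "r > 0"
    unfolding r_def by (intro sum_pos2[of _ i]) auto
  ultimately show ?thesis
    by (simp add: complex_is_Real_iff)
qed

section \<open>Realification of complex matrices\<close>

lemma sum_lessThan_double:
  fixes f :: "nat \<Rightarrow> 'a::comm_monoid_add"
  shows "(\<Sum>k<2 * n. f k) = (\<Sum>k<n. f k + f (k + n))"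
proof -
  have "(\<Sum>k<n + m. f k) = (\<Sum>k<n. f k) + (\<Sum>k<m. f (k + n))" for m
    by (induction m) (simp_all add: ac_simps)
  from this[of n] show ?thesis
    by (simp add: mult_2 sum.distrib)
qed

definition realify :: "complex mat \<Rightarrow> real mat" where
  "realify C = four_block_mat (map_mat Re C) (- map_mat Im C) (map_mat Im C) (map_mat Re C)"

lemma dim_realify [simp]:
  "dim_row (realify C) = 2 * dim_row C" "dim_col (realify C) = 2 * dim_col C"
  unfolding realify_def by (simp_all add: mult_2)

lemma realify_carrier [simp]: "C \<in> carrier_mat n n \<Longrightarrow> realify C \<in> carrier_mat (2 * n) (2 * n)"
  by auto

lemma index_realify:
  assumes "C \<in> carrier_mat n n" "i < 2 * n" "j < 2 * n"
  shows "realify C $$ (i, j) =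
    (if i < n then if j < n then Re (C $$ (i, j)) else - Im (C $$ (i, j - n))
     else if j < n then Im (C $$ (i - n, j)) else Re (C $$ (i - n, j - n)))"
  using assms unfolding realify_def by (auto simp: mult_2)

lemma realify_mult:
  assumes C: "C \<in> carrier_mat n n" and D: "D \<in> carrier_mat n n"
  shows "realify (C * D) = realify C * realify D"
proof (rule eq_matI)
  have CD: "C * D \<in> carrier_mat n n"
    using C D by simp
  fix i j assume "i < dim_row (realify C * realify D)" "j < dim_col (realify C * realify D)"
  then have i: "i < 2 * n" and j: "j < 2 * n"
    using realify_carrier[OF C] realify_carrier[OF D] by auto
  have "(realify C * realify D) $$ (i, j) =
      (\<Sum>k<n. realify C $$ (i, k) * realify D $$ (k, j) + realify C $$ (i, k + n) * realify D $$ (k + n, j))"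
    using index_mult_mat_sum[OF realify_carrier[OF C] realify_carrier[OF D] i j]
    by (simp add: sum_lessThan_double)
  also have "\<dots> = (\<Sum>k<n.
      if i < n then if j < n then Re (C $$ (i, k) * D $$ (k, j)) else - Im (C $$ (i, k) * D $$ (k, j - n))
      else if j < n then Im (C $$ (i - n, k) * D $$ (k, j)) else Re (C $$ (i - n, k) * D $$ (k, j - n)))"
    using i j by (intro sum.cong refl) (auto simp: index_realify[OF C] index_realify[OF D])
  also have "\<dots> = realify (C * D) $$ (i, j)"
    using i j by (cases "i < n"; cases "j < n")
      (simp_all add: index_realify[OF CD] index_mult_mat_sum[OF C D] sum_negf sum_subtractf
        del: index_mult_mat(1))
  finally show "realify (C * D) $$ (i, j) = (realify C * realify D) $$ (i, j)" ..
qed (use C D in simp_all)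

lemma realify_one: "realify (1\<^sub>m n) = 1\<^sub>m (2 * n)"
  by (rule eq_matI) (auto simp: realify_def mult_2)

lemma realify_adjoint:
  assumes "C \<in> carrier_mat n n"
  shows "realify (transpose_mat (map_mat cnj C)) = transpose_mat (realify C)"
  by (rule eq_matI) (use assms in \<open>auto simp: realify_def mult_2\<close>)

definition realify_embedding :: "nat \<Rightarrow> complex mat" where
  "realify_embedding n = mat (2 * n) n (\<lambda>(i, k). if i = k then 1 else if i = k + n then - \<i> else 0)"

lemma dim_realify_embedding [simp]:
  "dim_row (realify_embedding n) = 2 * n" "dim_col (realify_embedding n) = n"
  by (simp_all add: realify_embedding_def)

lemma realify_embedding_carrier [simp]: "realify_embedding n \<in> carrier_mat (2 * n) n"
  by (simp add: carrier_matI)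

lemma realify_mult_embedding:
  assumes C: "C \<in> carrier_mat n n"
  shows "map_mat complex_of_real (realify C) * realify_embedding n = realify_embedding n * C"
proof (rule eq_matI)
  let ?R = "map_mat complex_of_real (realify C)" and ?J = "realify_embedding n"
  fix i j assume "i < dim_row (?J * C)" "j < dim_col (?J * C)"
  then have i: "i < 2 * n" and j: "j < n"
    using C by auto
  have "(?R * ?J) $$ (i, j) = (\<Sum>k<2 * n. ?R $$ (i, k) * ?J $$ (k, j))"
    by (rule index_mult_mat_sum) (use C i j in auto)
  also have "\<dots> = (\<Sum>k<n. of_real (realify C $$ (i, k)) * of_bool (k = j)
      - \<i> * of_real (realify C $$ (i, k + n)) * of_bool (k = j))"
    unfolding sum_lessThan_double using C i j by (intro sum.cong refl) (auto simp: realify_embedding_def)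
  also have "\<dots> = of_real (realify C $$ (i, j)) - \<i> * of_real (realify C $$ (i, j + n))"
    using j by (simp add: sum_subtractf)
  also have "\<dots> = (if i < n then C $$ (i, j) else - \<i> * C $$ (i - n, j))"
    using C i j by (cases "i < n") (simp_all add: index_realify complex_eq_iff)
  also have "\<dots> = (\<Sum>k<n. if k = (if i < n then i else i - n) then (if i < n then 1 else - \<i>) * C $$ (k, j) else 0)"
    using i by auto
  also have "\<dots> = (\<Sum>k<n. ?J $$ (i, k) * C $$ (k, j))"
    using i by (intro sum.cong refl) (auto simp: realify_embedding_def)
  also have "\<dots> = (?J * C) $$ (i, j)"
    by (rule index_mult_mat_sum[symmetric, OF realify_embedding_carrier C i j])
  finally show "(?R * ?J) $$ (i, j) = (?J * C) $$ (i, j)" .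
qed (use C in auto)

lemma realify_embedding_mult_vec_neq_0:
  assumes v: "v \<in> carrier_vec n" "v \<noteq> 0\<^sub>v n"
  shows "realify_embedding n *\<^sub>v v \<noteq> 0\<^sub>v (2 * n)"
proof
  assume Jv: "realify_embedding n *\<^sub>v v = 0\<^sub>v (2 * n)"
  have "v $ i = 0" if i: "i < n" for i
  proof -
    have "(realify_embedding n *\<^sub>v v) $ i = (\<Sum>k<n. realify_embedding n $$ (i, k) * v $ k)"
      using i by (intro index_mult_mat_vec_sum[OF realify_embedding_carrier v(1)]) simp
    also have "\<dots> = (\<Sum>k<n. if k = i then v $ k else 0)"
      using i by (intro sum.cong refl) (auto simp: realify_embedding_def)
    finally show ?thesis
      using Jv i by simp
  qed
  then show False
    using v by (metis eq_vecI carrier_vecD index_zero_vec)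
qed

lemma eigenvalue_realify:
  assumes C: "C \<in> carrier_mat n n" and ev: "eigenvalue C z"
  shows "eigenvalue (map_mat complex_of_real (realify C)) z"
proof -
  obtain v where v: "eigenvector C v z"
    using ev unfolding eigenvalue_def by blast
  then have "v \<in> carrier_vec n" "v \<noteq> 0\<^sub>v n"
    using C unfolding eigenvector_def by auto
  then show ?thesis
    using C v realify_mult_embedding[OF C] realify_embedding_mult_vec_neq_0
    by (intro eigenvalue_if_intertwined[of C n _ "2 * n" "realify_embedding n"]) auto
qed

section \<open>Evaluation of words\<close>

definition flip_letter :: "nat \<times> bool \<Rightarrow> nat \<times> bool" where
  "flip_letter = (\<lambda>(i, t). (i, \<not> t))"

lemma flip_letter_neq [simp]: "flip_letter x \<noteq> x"
  by (cases x) (simp add: flip_letter_def)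

lemma flip_flip_letter [simp]: "flip_letter (flip_letter x) = x"
  by (cases x) (simp add: flip_letter_def)

lemma word_transpose_Cons: "word_transpose (x # u) = word_transpose u @ [flip_letter x]"
  by (simp add: word_transpose_def flip_letter_def)

lemma eval_word_Nil: "eval_word n A [] = 1\<^sub>m n"
  by (simp add: eval_word_def)

lemma eval_word_Cons: "eval_word n A (x # u) = letter_mat A x * eval_word n A u"
  by (simp add: eval_word_def)

context
  fixes n :: nat and A :: "nat \<Rightarrow> real mat"
  assumes A: "\<And>i. A i \<in> carrier_mat n n"
begin

lemma letter_mat_carrier [simp]: "letter_mat A x \<in> carrier_mat n n"
  using A by (simp add: letter_mat_def)

lemma eval_word_carrier [simp]: "eval_word n A u \<in> carrier_mat n n"
  by (induction u) (auto simp: eval_word_Nil eval_word_Cons intro!: mult_carrier_mat)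

lemma eval_word_single: "eval_word n A [x] = letter_mat A x"
  by (simp add: eval_word_Cons eval_word_Nil right_mult_one_mat[of _ n n])

lemma eval_word_append: "eval_word n A (u @ v) = eval_word n A u * eval_word n A v"
proof (induction u)
  case Nil
  show ?case by (simp add: eval_word_Nil left_mult_one_mat[of _ n n])
next
  case (Cons x u)
  then show ?case
    by (simp add: eval_word_Cons assoc_mult_mat[of _ n n _ n _ n])
qed

lemma letter_mat_flip_letter: "letter_mat A (flip_letter x) = transpose_mat (letter_mat A x)"
  by (cases x) (simp add: letter_mat_def flip_letter_def)

lemma eval_word_transpose: "eval_word n A (word_transpose u) = transpose_mat (eval_word n A u)"
proof (induction u)
  case Nil
  show ?case by (simp add: eval_word_Nil word_transpose_def)
next
  case (Cons x u)
  have "eval_word n A (word_transpose (x # u)) = transpose_mat (eval_word n A u) * transpose_mat (letter_mat A x)"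
    by (simp add: word_transpose_Cons eval_word_append Cons.IH eval_word_single letter_mat_flip_letter)
  also have "\<dots> = transpose_mat (eval_word n A (x # u))"
    by (simp add: eval_word_Cons transpose_mult[of _ n n _ n])
  finally show ?case .
qed

lemma eigenvalue_eval_word_rotate:
  assumes ev: "eigenvalue (map_mat complex_of_real (eval_word n A w)) z" and z: "z \<noteq> 0"
  shows "eigenvalue (map_mat complex_of_real (eval_word n A (rotate j w))) z"
proof -
  let ?c = "map_mat complex_of_real"
  define U where "U = eval_word n A (take (j mod length w) w)"
  define V where "V = eval_word n A (drop (j mod length w) w)"
  have U: "U \<in> carrier_mat n n" and V: "V \<in> carrier_mat n n"
    by (simp_all add: U_def V_def)
  have "eval_word n A w = U * V"
    unfolding U_def V_def eval_word_append[symmetric] by simp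
  then have "eigenvalue (?c U * ?c V) z"
    using ev by (simp add: of_real_hom.mat_hom_mult[OF U V])
  then have "eigenvalue (?c V * ?c U) z"
    using U V z eigenvalue_mult_swap[of "?c U" n "?c V" z] by simp
  moreover have "eval_word n A (rotate j w) = V * U"
    unfolding U_def V_def eval_word_append[symmetric] rotate_drop_take ..
  ultimately show ?thesis
    by (simp add: of_real_hom.mat_hom_mult[OF V U])
qed

end

lemma eval_word_cong:
  assumes "\<And>i. i \<in> fst ` set u \<Longrightarrow> A i = B i"
  shows "eval_word n A u = eval_word n B u"
  using assms by (induction u) (auto simp: eval_word_Nil eval_word_Cons letter_mat_def)

lemma real_eigenvalued_if_symmetric_word:
  assumes w: "word_over l w" and sym: "symmetric_word w"
  shows "real_eigenvalued l w"
  unfolding real_eigenvalued_def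
proof (intro allI impI)
  fix n :: nat and A :: "nat \<Rightarrow> real mat" and z :: complex
  assume A: "\<forall>i<l. A i \<in> carrier_mat n n"
    and ev: "eigenvalue (map_mat complex_of_real (eval_word n A w)) z"
  define A' where "A' i = (if i < l then A i else 1\<^sub>m n)" for i
  have A': "A' i \<in> carrier_mat n n" for i
    using A by (simp add: A'_def)
  have "eval_word n A w = eval_word n A' w"
    using w by (intro eval_word_cong) (auto simp: A'_def word_over_def)
  then have ev': "eigenvalue (map_mat complex_of_real (eval_word n A' w)) z"
    using ev by simp
  obtain j where "rotate j w = take (length w div 2) (rotate j w) @ word_transpose (take (length w div 2) (rotate j w))"
    using sym unfolding symmetric_word_def Let_def by blast
  then obtain L where rot: "rotate j w = L @ word_transpose L"
    by blast
  show "z \<in> \<real>"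
  proof (cases "z = 0")
    case False
    let ?E = "eval_word n A' L"
    have E: "?E \<in> carrier_mat n n"
      using A' by simp
    have "eval_word n A' (rotate j w) = ?E * transpose_mat ?E"
      unfolding rot using A' by (simp add: eval_word_append eval_word_transpose)
    then have "eigenvalue (map_mat complex_of_real (?E * transpose_mat ?E)) z"
      using eigenvalue_eval_word_rotate[OF A' ev' False, of j] by simp
    moreover have "transpose_mat (?E * transpose_mat ?E) = ?E * transpose_mat ?E"
      using E by (simp add: transpose_mult[of _ n n _ n])
    ultimately show ?thesis
      using E by (intro eigenvalue_real_if_symmetric[of "?E * transpose_mat ?E" n]) simp_all
  qed simp
qed

section \<open>Walks along a cyclic word\<close>

definition cyclic_nth :: "'a list \<Rightarrow> int \<Rightarrow> 'a" where
  "cyclic_nth w a = w ! nat (a mod int (length w))"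

lemma cyclic_nth_cong: "a mod int (length w) = b mod int (length w) \<Longrightarrow> cyclic_nth w a = cyclic_nth w b"
  by (simp add: cyclic_nth_def)

lemma cyclic_nth_mod [simp]: "cyclic_nth w (a mod int (length w)) = cyclic_nth w a"
  by (simp add: cyclic_nth_def)

lemma cyclic_nth_of_nat: "j < length w \<Longrightarrow> cyclic_nth w (int j) = w ! j"
  by (simp add: cyclic_nth_def)

lemma nth_rotate_cyclic_nth:
  "t < length w \<Longrightarrow> rotate s w ! t = cyclic_nth w (int s + int t)"
  by (simp add: cyclic_nth_def nth_rotate add.commute flip: of_nat_add zmod_int)

text \<open>\<open>walks w u a e\<close> counts the walks on \<open>\<int>\<close> from \<open>a\<close> to \<open>e\<close> that spell \<open>u\<close>, where the
  edge between \<open>c\<close> and \<open>c + 1\<close> reads \<open>cyclic_nth w c\<close> upwards and its transpose downwards.\<close>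
fun walks :: "word \<Rightarrow> word \<Rightarrow> int \<Rightarrow> int \<Rightarrow> nat" where
  "walks w [] a e = of_bool (a = e)"
| "walks w (x # u) a e =
     (if cyclic_nth w a = x then walks w u (a + 1) e else 0) +
     (if cyclic_nth w (a - 1) = flip_letter x then walks w u (a - 1) e else 0)"

lemma walks_eq_0_if_far: "int (length u) < \<bar>e - a\<bar> \<Longrightarrow> walks w u a e = 0"
  by (induction u arbitrary: a) auto

lemma walks_downward_letters:
  assumes "0 < walks w u a (a - int (length u))" and "j < length u"
  shows "cyclic_nth w (a - 1 - int j) = flip_letter (u ! j)"
  using assms
proof (induction u arbitrary: a j)
  case (Cons x u)
  have "walks w u (a + 1) (a - int (length (x # u))) = 0"
    by (rule walks_eq_0_if_far) auto
  with Cons.prems have down: "cyclic_nth w (a - 1) = flip_letter x"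
    and pos: "0 < walks w u (a - 1) (a - 1 - int (length u))"
    by (auto split: if_splits simp: algebra_simps)
  show ?case
  proof (cases j)
    case (Suc j')
    with Cons.IH[OF pos, of j'] Cons.prems show ?thesis
      by (simp add: algebra_simps)
  qed (use down in simp)
qed simp

lemma walks_upward_pos:
  assumes "\<And>j. j < length u \<Longrightarrow> cyclic_nth w (a + int j) = u ! j"
  shows "0 < walks w u a (a + int (length u))"
  using assms
proof (induction u arbitrary: a)
  case (Cons x u)
  have "cyclic_nth w (a + 1 + int j) = u ! j" if "j < length u" for j
    using Cons.prems[of "Suc j"] that by (simp add: algebra_simps)
  from Cons.IH[OF this] Cons.prems[of 0] show ?case
    by (simp add: algebra_simps)
qed simp

lemma symmetric_wordI:
  assumes "even (length w)" and "s < length w"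
    and "\<And>t. t < length w \<Longrightarrow> rotate s w ! t = flip_letter (rotate s w ! (length w - 1 - t))"
  shows "symmetric_word w"
proof -
  define r where "r = rotate s w"
  define h where "h = length w div 2"
  have len: "length r = 2 * h"
    using assms(1) by (simp add: r_def h_def)
  have "r = take h r @ word_transpose (take h r)"
  proof (rule nth_equalityI)
    fix t assume "t < length r"
    then show "r ! t = (take h r @ word_transpose (take h r)) ! t"
      using assms(3)[of t] len
      by (cases "t < h") (auto simp: nth_append word_transpose_def rev_nth flip_letter_def r_def mult_2)
  qed (simp add: len word_transpose_def)
  then show ?thesis
    using assms(1,2) unfolding symmetric_word_def Let_def r_def h_def by blast
qed

text \<open>A reflection \<open>j \<mapsto> c - j\<close> of the cyclic word that transposes every letter can fix
  no position, since no letter is its own transpose.\<close>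
lemma reflection_odd_axis_even_length:
  assumes w: "w \<noteq> []" and refl: "\<And>j. cyclic_nth w (c - j) = flip_letter (cyclic_nth w j)"
  shows "odd c" "even (length w)"
proof -
  define k where "k = int (length w)"
  have no_fixed: "(c - j) mod k \<noteq> j mod k" for j
    using refl[of j] cyclic_nth_cong[of "c - j" w j] by (auto simp: k_def)
  show "odd c"
    using no_fixed[of "c div 2"] by (auto elim: evenE)
  show "even (length w)"
  proof (rule ccontr)
    assume "odd (length w)"
    define j where "j = (c + k) div 2"
    have "2 * j = c + k"
      using \<open>odd c\<close> \<open>odd (length w)\<close> by (simp add: j_def k_def)
    then have "c - j = j - k"
      by linarith
    then have "(c - j) mod k = j mod k"
      by simp
    with no_fixed show False
      by blast
  qed
qed

text \<open>Rotating the axis of the reflection to the middle exhibits the word as \<open>L L\<^sup>T\<close>.\<close>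
lemma symmetric_word_if_reflection:
  assumes w: "w \<noteq> []" and refl: "\<And>j. cyclic_nth w (c - j) = flip_letter (cyclic_nth w j)"
  shows "symmetric_word w"
proof -
  define k where "k = int (length w)"
  define q where "q = (c + 1) div 2 div k"
  define s where "s = nat (((c + 1) div 2) mod k)"
  have s: "(c + 1) div 2 = k * q + int s" and "s < length w"
    using w by (simp_all add: s_def q_def k_def nat_less_iff)
  have "2 * ((c + 1) div 2) = c + 1"
    using reflection_odd_axis_even_length(1)[OF w refl] by presburger
  with s have c: "c = 2 * (k * q) + 2 * int s - 1"
    by linarith
  show ?thesis
  proof (rule symmetric_wordI)
    fix t assume t: "t < length w"
    define j where "j = int s + int (length w - 1 - t)"
    have "j = int s + k - 1 - int t"
      using t by (simp add: j_def k_def of_nat_diff)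
    then have "c - j = int s + int t + k * (2 * q - 1)"
      unfolding c by (simp add: algebra_simps)
    then have "(c - j) mod k = (int s + int t) mod k"
      by simp
    then have "cyclic_nth w (c - j) = rotate s w ! t"
      using t cyclic_nth_cong[of "c - j" w "int s + int t"] by (simp add: nth_rotate_cyclic_nth k_def)
    moreover have "rotate s w ! (length w - 1 - t) = cyclic_nth w j"
      using t by (simp add: nth_rotate_cyclic_nth j_def)
    ultimately show "rotate s w ! t = flip_letter (rotate s w ! (length w - 1 - t))"
      using refl[of j] by simp
  qed (use reflection_odd_axis_even_length(2)[OF w refl] \<open>s < length w\<close> in auto)
qed

lemma symmetric_word_if_backward_winding_walk:
  assumes w: "w \<noteq> []" and pos: "0 < walks w w a (a - int (length w))"
  shows "symmetric_word w"
proof (rule symmetric_word_if_reflection[OF w])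
  fix j :: int
  define j' where "j' = nat (j mod int (length w))"
  have j': "j' < length w" "int j' = j mod int (length w)"
    using w by (simp_all add: j'_def nat_less_iff)
  have "cyclic_nth w (a - 1 - j) = cyclic_nth w (a - 1 - int j')"
    by (intro cyclic_nth_cong) (simp add: j'(2) mod_diff_right_eq)
  also have "\<dots> = flip_letter (w ! j')"
    by (rule walks_downward_letters[OF pos j'(1)])
  also have "w ! j' = cyclic_nth w j"
    by (simp add: cyclic_nth_def j'_def)
  finally show "cyclic_nth w (a - 1 - j) = flip_letter (cyclic_nth w j)" .
qed

section \<open>Step matrices\<close>

definition step_mat :: "word \<Rightarrow> complex \<Rightarrow> nat \<times> bool \<Rightarrow> complex mat" where
  "step_mat w t x = mat (length w) (length w) (\<lambda>(r, c).
     (if int c = (int r + 1) mod int (length w) \<and> cyclic_nth w (int r) = x then t else 0) +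
     (if int c = (int r - 1) mod int (length w) \<and> cyclic_nth w (int r - 1) = flip_letter x
      then cnj t else 0))"

definition step_mat_word :: "word \<Rightarrow> complex \<Rightarrow> word \<Rightarrow> complex mat" where
  "step_mat_word w t u = foldr (\<lambda>x M. step_mat w t x * M) u (1\<^sub>m (length w))"

lemma dim_step_mat [simp]:
  "dim_row (step_mat w t x) = length w" "dim_col (step_mat w t x) = length w"
  by (simp_all add: step_mat_def)

lemma step_mat_carrier [simp]: "step_mat w t x \<in> carrier_mat (length w) (length w)"
  by (simp add: carrier_matI)

lemma step_mat_word_Nil: "step_mat_word w t [] = 1\<^sub>m (length w)"
  by (simp add: step_mat_word_def)

lemma step_mat_word_Cons: "step_mat_word w t (x # u) = step_mat w t x * step_mat_word w t u"
  by (simp add: step_mat_word_def)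

lemma step_mat_word_carrier [simp]: "step_mat_word w t u \<in> carrier_mat (length w) (length w)"
  by (induction u) (auto simp: step_mat_word_Nil step_mat_word_Cons intro!: mult_carrier_mat)

lemma eq_succ_mod_iff_eq_pred_mod:
  fixes a b m :: int
  assumes "0 \<le> a" "a < m" "0 \<le> b" "b < m"
  shows "b = (a + 1) mod m \<longleftrightarrow> a = (b - 1) mod m"
proof -
  have "b = (a + 1) mod m \<longleftrightarrow> b mod m = (a + 1) mod m"
    using assms by simp
  also have "\<dots> \<longleftrightarrow> m dvd (a + 1) - b"
    by (simp add: mod_eq_dvd_iff dvd_diff_commute)
  also have "\<dots> \<longleftrightarrow> a mod m = (b - 1) mod m"
    by (simp add: mod_eq_dvd_iff algebra_simps)
  also have "\<dots> \<longleftrightarrow> a = (b - 1) mod m"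
    using assms by simp
  finally show ?thesis .
qed

lemma step_mat_flip_letter:
  "step_mat w t (flip_letter x) = transpose_mat (map_mat cnj (step_mat w t x))"
proof (rule eq_matI)
  let ?k = "int (length w)"
  fix r c assume "r < dim_row (transpose_mat (map_mat cnj (step_mat w t x)))"
    "c < dim_col (transpose_mat (map_mat cnj (step_mat w t x)))"
  then have r: "r < length w" and c: "c < length w"
    by auto
  have fwd: "int c = (int r + 1) mod ?k \<and> cyclic_nth w (int r) = flip_letter x \<longleftrightarrow>
      int r = (int c - 1) mod ?k \<and> cyclic_nth w (int c - 1) = flip_letter x"
    using r c by (auto simp: eq_succ_mod_iff_eq_pred_mod intro: cyclic_nth_cong)
  have bwd: "int c = (int r - 1) mod ?k \<and> cyclic_nth w (int r - 1) = x \<longleftrightarrow>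
      int r = (int c + 1) mod ?k \<and> cyclic_nth w (int c) = x"
    using r c by (auto simp: eq_succ_mod_iff_eq_pred_mod intro: cyclic_nth_cong)
  have "step_mat w t (flip_letter x) $$ (r, c) =
      (if int c = (int r + 1) mod ?k \<and> cyclic_nth w (int r) = flip_letter x then t else 0) +
      (if int c = (int r - 1) mod ?k \<and> cyclic_nth w (int r - 1) = x then cnj t else 0)"
    using r c by (simp add: step_mat_def)
  also have "\<dots> = transpose_mat (map_mat cnj (step_mat w t x)) $$ (r, c)"
    using r c by (simp only: fwd bwd) (simp add: step_mat_def)
  finally show "step_mat w t (flip_letter x) $$ (r, c) = transpose_mat (map_mat cnj (step_mat w t x)) $$ (r, c)" .
qed auto

lemma step_mat_mult_row:
  assumes w: "w \<noteq> []" and Q: "Q \<in> carrier_mat (length w) (length w)" and b: "b < length w"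
  shows "(step_mat w t x * Q) $$ (nat (a mod int (length w)), b) =
    (if cyclic_nth w a = x then t * Q $$ (nat ((a + 1) mod int (length w)), b) else 0) +
    (if cyclic_nth w (a - 1) = flip_letter x then cnj t * Q $$ (nat ((a - 1) mod int (length w)), b) else 0)"
proof -
  let ?k = "int (length w)"
  define r where "r = nat (a mod ?k)"
  define c\<^sub>1 where "c\<^sub>1 = nat ((a + 1) mod ?k)"
  define c\<^sub>2 where "c\<^sub>2 = nat ((a - 1) mod ?k)"
  have k: "0 < ?k"
    using w by simp
  have r: "r < length w" "int r = a mod ?k" and c: "c\<^sub>1 < length w" "c\<^sub>2 < length w"
    using k by (simp_all add: r_def c\<^sub>1_def c\<^sub>2_def nat_less_iff)
  have "(step_mat w t x * Q) $$ (r, b) = (\<Sum>c<length w. step_mat w t x $$ (r, c) * Q $$ (c, b))"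
    using Q r b by (intro index_mult_mat_sum) auto
  also have "\<dots> = (\<Sum>c<length w.
      (if c = c\<^sub>1 then (if cyclic_nth w a = x then t else 0) else 0) * Q $$ (c, b) +
      (if c = c\<^sub>2 then (if cyclic_nth w (a - 1) = flip_letter x then cnj t else 0) else 0) * Q $$ (c, b))"
    (is "_ = sum ?f _")
  proof (intro sum.cong refl)
    fix c assume "c \<in> {..<length w}"
    have "int c = (int r + 1) mod ?k \<longleftrightarrow> c = c\<^sub>1" "int c = (int r - 1) mod ?k \<longleftrightarrow> c = c\<^sub>2"
      using k by (auto simp: r(2) c\<^sub>1_def c\<^sub>2_def mod_add_left_eq mod_diff_left_eq)
    moreover have "cyclic_nth w (int r) = cyclic_nth w a" "cyclic_nth w (int r - 1) = cyclic_nth w (a - 1)"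
      using cyclic_nth_cong[of "a mod ?k - 1" w "a - 1"] by (simp_all add: r(2) mod_diff_left_eq)
    ultimately show "step_mat w t x $$ (r, c) * Q $$ (c, b) = ?f c"
      using r \<open>c \<in> {..<length w}\<close> by (simp add: step_mat_def distrib_right)
  qed
  also have "\<dots> = (if cyclic_nth w a = x then t * Q $$ (c\<^sub>1, b) else 0) +
      (if cyclic_nth w (a - 1) = flip_letter x then cnj t * Q $$ (c\<^sub>2, b) else 0)"
    using c by (simp add: sum.distrib if_distrib[of "\<lambda>y. y * _"] cong: if_cong)
  finally show ?thesis
    by (simp add: r_def c\<^sub>1_def c\<^sub>2_def)
qed

lemma power_int_step:
  fixes t :: complex and a e :: int
  assumes "t \<noteq> 0"
  shows "t * t powi (e - (a + 1)) = t powi (e - a)" "inverse t * t powi (e - (a - 1)) = t powi (e - a)"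
proof -
  have "t powi (e - a) = t powi (1 + (e - (a + 1)))"
    by (rule arg_cong[of _ _ "power_int t"]) simp
  also have "\<dots> = t powi 1 * t powi (e - (a + 1))"
    using assms by (intro power_int_add) simp
  finally show "t * t powi (e - (a + 1)) = t powi (e - a)"
    by simp
  have "t powi (e - (a - 1)) = t powi (1 + (e - a))"
    by (rule arg_cong[of _ _ "power_int t"]) simp
  also have "\<dots> = t powi 1 * t powi (e - a)"
    using assms by (intro power_int_add) simp
  finally show "inverse t * t powi (e - (a - 1)) = t powi (e - a)"
    using assms by simp
qed

text \<open>Entries of a product of step matrices count walks on \<open>\<int>\<close>, the universal cover of the
  cycle, weighted by \<open>t\<close> to the power of their displacement: forward steps carry \<open>t\<close> and
  backward steps \<open>cnj t = inverse t\<close>.\<close>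
lemma step_mat_word_entry:
  assumes w: "w \<noteq> []" and b: "b < length w" and t: "cmod t = 1"
    and I: "finite I" "{a - int (length u) .. a + int (length u)} \<subseteq> I"
  shows "step_mat_word w t u $$ (nat (a mod int (length w)), b) =
    (\<Sum>e \<in> {e \<in> I. e mod int (length w) = int b}. t powi (e - a) * of_nat (walks w u a e))"
  using I(2)
proof (induction u arbitrary: a)
  case Nil
  have "a \<in> I"
    using Nil by auto
  have "nat (a mod int (length w)) = b \<longleftrightarrow> a mod int (length w) = int b"
    using w by auto
  then show ?case
    using w b I(1) \<open>a \<in> I\<close> by (auto simp: step_mat_word_Nil nat_less_iff of_bool_def if_distrib cong: if_cong)
next
  case (Cons x u)
  let ?S = "{e \<in> I. e mod int (length w) = int b}"
  have "t * cnj t = 1"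
    using complex_norm_square[of t] t by simp
  then have t0: "t \<noteq> 0" and cnj_t: "cnj t = inverse t"
    using inverse_unique[of t "cnj t"] by auto
  have IH: "step_mat_word w t u $$ (nat (a' mod int (length w)), b) =
      (\<Sum>e\<in>?S. t powi (e - a') * of_nat (walks w u a' e))" if "a' \<in> {a - 1, a + 1}" for a'
    using Cons.prems that by (intro Cons.IH) auto
  have "step_mat_word w t (x # u) $$ (nat (a mod int (length w)), b) =
      (if cyclic_nth w a = x then t * (\<Sum>e\<in>?S. t powi (e - (a + 1)) * of_nat (walks w u (a + 1) e)) else 0) +
      (if cyclic_nth w (a - 1) = flip_letter x
       then inverse t * (\<Sum>e\<in>?S. t powi (e - (a - 1)) * of_nat (walks w u (a - 1) e)) else 0)"
    using w b by (simp add: step_mat_word_Cons step_mat_mult_row IH cnj_t)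
  also have "\<dots> = (\<Sum>e\<in>?S. t powi (e - a) * of_nat (walks w (x # u) a e))"
    by (cases "cyclic_nth w a = x"; cases "cyclic_nth w (a - 1) = flip_letter x")
       (simp_all add: sum_distrib_left sum.distrib distrib_left mult.assoc[symmetric] power_int_step[OF t0])
  finally show ?case .
qed

lemma residue_class_in_interval:
  fixes a k :: int
  assumes "0 \<le> a" "a < k"
  shows "{e \<in> {a - k .. a + k}. e mod k = a} = {a - k, a, a + k}"
proof (intro equalityI subsetI)
  fix e assume "e \<in> {e \<in> {a - k .. a + k}. e mod k = a}"
  then have bounds: "a - k \<le> e" "e \<le> a + k" and "e mod k = a"
    by auto
  then have e: "e = k * (e div k) + a"
    using mult_div_mod_eq[of k e] by simp
  then have "k * (e div k) \<le> k * 1" "k * (- 1) \<le> k * (e div k)"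
    using bounds by linarith+
  then have "e div k \<le> 1" "- 1 \<le> e div k"
    using assms by (simp_all only: mult_le_cancel_left_pos)
  then have "e div k = - 1 \<or> e div k = 0 \<or> e div k = 1"
    by linarith
  then show "e \<in> {a - k, a, a + k}"
    using e by auto
qed (use assms in auto)

lemma step_mat_word_diag:
  assumes w: "w \<noteq> []" and a: "a < length w" and t: "cmod t = 1"
  defines "k \<equiv> int (length w)"
  shows "step_mat_word w t w $$ (a, a) =
    t powi (- k) * of_nat (walks w w (int a) (int a - k)) + of_nat (walks w w (int a) (int a))
    + t powi k * of_nat (walks w w (int a) (int a + k))"
proof -
  have "step_mat_word w t w $$ (nat (int a mod k), a) =
      (\<Sum>e \<in> {e \<in> {int a - k .. int a + k}. e mod k = int a}. t powi (e - int a) * of_nat (walks w w (int a) e))"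
    unfolding k_def by (rule step_mat_word_entry[OF w a t]) auto
  also have "{e \<in> {int a - k .. int a + k}. e mod k = int a} = {int a - k, int a, int a + k}"
    using a by (intro residue_class_in_interval) (auto simp: k_def)
  finally show ?thesis
    using a w by (simp add: k_def add.assoc)
qed

lemma eval_word_realify_step_mat:
  "eval_word (2 * length w) (\<lambda>i. realify (step_mat w t (i, False))) u = realify (step_mat_word w t u)"
proof (induction u)
  case Nil
  show ?case
    by (simp add: eval_word_Nil step_mat_word_Nil realify_one)
next
  case (Cons x u)
  obtain i b where x: "x = (i, b)"
    by (cases x)
  have "letter_mat (\<lambda>i. realify (step_mat w t (i, False))) x = realify (step_mat w t x)"
  proof (cases b)
    case True
    have "transpose_mat (realify (step_mat w t (i, False))) =
        realify (step_mat w t (flip_letter (i, False)))"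
      by (simp add: step_mat_flip_letter realify_adjoint[of _ "length w"])
    then show ?thesis
      using True x by (simp add: letter_mat_def flip_letter_def)
  qed (simp add: x letter_mat_def)
  then show ?case
    by (simp add: eval_word_Cons step_mat_word_Cons Cons.IH realify_mult[of _ "length w"])
qed

lemma mat_trace_step_mat_word_not_real:
  assumes w: "w \<noteq> []" and asym: "\<not> symmetric_word w"
  shows "mat_trace (step_mat_word w (cis (pi / (2 * length w))) w) \<notin> \<real>"
proof -
  define \<theta> where "\<theta> = cis (pi / (2 * length w))"
  have \<theta>: "cmod \<theta> = 1"
    by (simp add: \<theta>_def)
  have "\<theta> ^ length w = cis (real (length w) * (pi / (2 * length w)))"
    by (simp add: \<theta>_def DeMoivre)
  also have "\<dots> = \<i>"
    using w by (simp add: complex_eq_iff)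
  finally have \<theta>_pow: "\<theta> ^ length w = \<i>" "\<theta> powi (- int (length w)) = - \<i>"
    by (simp_all add: power_int_minus)
  have no_backward: "walks w w (int a) (int a - int (length w)) = 0" for a
    using symmetric_word_if_backward_winding_walk[OF w] asym by auto
  have "Im (mat_trace (step_mat_word w \<theta> w)) = (\<Sum>a<length w. Im (step_mat_word w \<theta> w $$ (a, a)))"
    using carrier_matD[OF step_mat_word_carrier[of w \<theta> w]] by (simp add: mat_trace_def)
  also have "\<dots> = (\<Sum>a<length w. real (walks w w (int a) (int a + int (length w))))"
    using w \<theta> by (intro sum.cong refl) (simp add: step_mat_word_diag \<theta>_pow no_backward)
  also have "\<dots> \<ge> real (walks w w (int 0) (int 0 + int (length w)))"
    by (rule member_le_sum) (use w in auto)
  finally have "1 \<le> Im (mat_trace (step_mat_word w \<theta> w))"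
    using walks_upward_pos[of w w 0] by (simp add: cyclic_nth_of_nat)
  then show ?thesis
    by (auto simp: \<theta>_def complex_is_Real_iff)
qed

lemma symmetric_word_if_real_eigenvalued:
  assumes w: "word_over l w" and real: "real_eigenvalued l w"
  shows "symmetric_word w"
proof (rule ccontr)
  assume asym: "\<not> symmetric_word w"
  have "w \<noteq> []"
    using w by (simp add: word_over_def)
  define C where "C = step_mat_word w (cis (pi / (2 * length w))) w"
  define A where "A = (\<lambda>i. realify (step_mat w (cis (pi / (2 * length w))) (i, False)))"
  have C: "C \<in> carrier_mat (length w) (length w)"
    by (simp add: C_def)
  obtain z where "eigenvalue C z" "z \<notin> \<real>"
    using mat_trace_real_if_eigenvalues_real[OF C] mat_trace_step_mat_word_not_real[OF \<open>w \<noteq> []\<close> asym]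
    unfolding C_def by blast
  moreover have "eigenvalue (map_mat complex_of_real (eval_word (2 * length w) A w)) z"
    using eigenvalue_realify[OF C \<open>eigenvalue C z\<close>]
    by (simp add: A_def C_def eval_word_realify_step_mat)
  moreover have "\<forall>i<l. A i \<in> carrier_mat (2 * length w) (2 * length w)"
    by (simp add: A_def)
  ultimately show False
    using real unfolding real_eigenvalued_def by blast
qed

theorem mainTheorem1:
  fixes l :: nat and P :: word
  assumes "word_over l P"
  shows "real_eigenvalued l P \<longleftrightarrow> symmetric_word P"
  using real_eigenvalued_if_symmetric_word[OF assms] symmetric_word_if_real_eigenvalued[OF assms]
  by blast

end
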